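(* Let $\Omega$ be a locally compact Hausdorff space and $\mu$ a nonnegative Radon measure on $\Omega$. Then for each $g\in L^\infty(\Omega,\mu)$, the set $$\Gamma_g:=\big\{f\in L^\infty(\Omega,\mu):\ |f|\geq|g|\ \ \mu\text{-a.e.}\big\}$$ is not $\sigma$-porous in $L^\infty(\Omega,\mu)$.
   Context: Porosity: Let $X$ be a metric space and $0<\lambda<1$. A set $E\subseteq X$ is $\lambda$-porous at $x\in E$ if for each $\delta>0$ there is $y\in B(x;\delta)\setminus\{x\}$ with $B(y;\lambda\, d(x,y))\cap E=\varnothing$; $E$ is $\lambda$-porous if it is $\lambda$-porous at each of its points; $E$ is $\sigma$-$\lambda$-porous if it is a countable union of $\lambda$-porous subsets of $X$. A set is called $\sigma$-porous if it is $\sigma$-$\lambda$-porous for some $\lambda\in(0,1)$; "not $\sigma$-porous" means not $\sigma$-$\lambda$-porous for any $\lambda\in(0,1)$. *)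

theory Defs
  imports "HOL-Analysis.Analysis" "HOL-Probability.Essential_Supremum"
begin

definition radon_measure :: "'a::t2_space measure \<Rightarrow> bool" where
  "radon_measure M \<longleftrightarrow>
     sets M = sets borel \<and>
     (\<forall>K. compact K \<longrightarrow> emeasure M K < \<infinity>) \<and>
     (\<forall>A\<in>sets borel. emeasure M A = (INF U\<in>{U. open U \<and> A \<subseteq> U}. emeasure M U)) \<and>
     (\<forall>U. open U \<longrightarrow> emeasure M U = (SUP K\<in>{K. compact K \<and> K \<subseteq> U}. emeasure M K))"

definition Linf :: "'a measure \<Rightarrow> ('a \<Rightarrow> real) set" where
  "Linf M = {f. f \<in> borel_measurable M \<and> (\<exists>C. AE x in M. \<bar>f x\<bar> \<le> C)}"

definition Linf_dist :: "'a measure \<Rightarrow> ('a \<Rightarrow> real) \<Rightarrow> ('a \<Rightarrow> real) \<Rightarrow> real" where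
  "Linf_dist M f g = real_of_ereal (esssup M (\<lambda>x. ereal \<bar>f x - g x\<bar>))"

text \<open>Porosity in a (pseudo)metric space with carrier S and distance d.
  Points at distance 0 are identified (as in the quotient space L-infinity),
  so "y different from x" reads d x y > 0.\<close>
definition porous_at :: "'b set \<Rightarrow> ('b \<Rightarrow> 'b \<Rightarrow> real) \<Rightarrow> real \<Rightarrow> 'b set \<Rightarrow> 'b \<Rightarrow> bool" where
  "porous_at S d lam E x \<longleftrightarrow>
     (\<forall>\<delta>>0. \<exists>y\<in>S. 0 < d x y \<and> d x y < \<delta> \<and>
        {z\<in>S. d y z < lam * d x y} \<inter> E = {})"

definition porous :: "'b set \<Rightarrow> ('b \<Rightarrow> 'b \<Rightarrow> real) \<Rightarrow> real \<Rightarrow> 'b set \<Rightarrow> bool" where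
  "porous S d lam E \<longleftrightarrow> E \<subseteq> S \<and> (\<forall>x\<in>E. porous_at S d lam E x)"

definition sigma_porous :: "'b set \<Rightarrow> ('b \<Rightarrow> 'b \<Rightarrow> real) \<Rightarrow> real \<Rightarrow> 'b set \<Rightarrow> bool" where
  "sigma_porous S d lam E \<longleftrightarrow> (\<exists>A :: nat \<Rightarrow> 'b set. (\<forall>n. porous S d lam (A n)) \<and> E = (\<Union>n. A n))"

end

theory Submission
  imports Defs
begin

text \<open>The set \<open>\<Gamma>\<^sub>g\<close> contains the closed unit ball around the constant \<open>\<parallel>g\<parallel>\<^sub>\<infinity> + 1\<close>,
  so it is not \<sigma>-porous by a Baire-type argument: given countably many porous sets,
  repeatedly shrink a closed ball inside a hole of the next porous set; since
  \<open>L\<^sup>\<infinity>\<close> is complete, the nested balls share a point, which lies in the original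
  ball but in none of the porous sets.\<close>

lemma Linf_dist_le_if_AE_le:
  assumes "f \<in> borel_measurable M" "g \<in> borel_measurable M" "0 \<le> c"
    and "AE x in M. \<bar>f x - g x\<bar> \<le> c"
  shows "Linf_dist M f g \<le> c"
proof -
  have "(\<lambda>x. ereal \<bar>f x - g x\<bar>) \<in> borel_measurable M" using assms by measurable
  then have "esssup M (\<lambda>x. ereal \<bar>f x - g x\<bar>) \<le> ereal c"
    by (rule esssup_I) (use assms(4) in auto)
  then show ?thesis unfolding Linf_dist_def using assms(3)
    by (cases "esssup M (\<lambda>x. ereal \<bar>f x - g x\<bar>)") auto
qed

lemma AE_abs_diff_le_Linf_dist:
  assumes "f \<in> Linf M" "g \<in> Linf M"
  shows "AE x in M. \<bar>f x - g x\<bar> \<le> Linf_dist M f g"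
proof -
  obtain Cf Cg where "AE x in M. \<bar>f x\<bar> \<le> Cf" "AE x in M. \<bar>g x\<bar> \<le> Cg"
    using assms unfolding Linf_def by blast
  then have bounded: "AE x in M. \<bar>f x - g x\<bar> \<le> Cf + Cg" by eventually_elim auto
  have "f \<in> borel_measurable M" "g \<in> borel_measurable M" using assms by (auto simp: Linf_def)
  then have "(\<lambda>x. ereal \<bar>f x - g x\<bar>) \<in> borel_measurable M" by measurable
  then have finite: "esssup M (\<lambda>x. ereal \<bar>f x - g x\<bar>) \<le> ereal (Cf + Cg)"
    by (rule esssup_I) (use bounded in auto)
  have ae: "AE x in M. ereal \<bar>f x - g x\<bar> \<le> esssup M (\<lambda>x. ereal \<bar>f x - g x\<bar>)"
    by (rule esssup_AE)
  show ?thesis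
  proof (cases "esssup M (\<lambda>x. ereal \<bar>f x - g x\<bar>)")
    case MInf
    then have "AE x in M. False" using ae by auto
    then show ?thesis by (rule AE_mp) auto
  qed (use ae finite in \<open>auto simp: Linf_dist_def\<close>)
qed

lemma Linf_dist_nonneg:
  assumes "f \<in> Linf M" "g \<in> Linf M"
  shows "0 \<le> Linf_dist M f g"
proof (cases "esssup M (\<lambda>x. ereal \<bar>f x - g x\<bar>)")
  case (real r)
  show ?thesis
  proof (rule ccontr)
    assume "\<not> 0 \<le> Linf_dist M f g"
    then have "r < 0" using real unfolding Linf_dist_def by auto
    moreover have "AE x in M. ereal \<bar>f x - g x\<bar> \<le> ereal r"
      using esssup_AE[of "\<lambda>x. ereal \<bar>f x - g x\<bar>" M] real by simp
    ultimately have "AE x in M. False" by (auto elim: AE_mp)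
    then have "emeasure M (space M) = 0"
      by (simp add: eventually_False ae_filter_eq_bot_iff)
    moreover have "f \<in> borel_measurable M" "g \<in> borel_measurable M"
      using assms by (auto simp: Linf_def)
    then have "(\<lambda>x. ereal \<bar>f x - g x\<bar>) \<in> borel_measurable M" by measurable
    ultimately show False using esssup_zero_space real by force
  qed
qed (auto simp: Linf_dist_def)

lemma Linf_dist_self: "f \<in> Linf M \<Longrightarrow> Linf_dist M f f = 0"
  using Linf_dist_le_if_AE_le[of f M f 0] Linf_dist_nonneg[of f M f] by (auto simp: Linf_def)

lemma Linf_dist_triangle:
  assumes "f \<in> Linf M" "g \<in> Linf M" "h \<in> Linf M"
  shows "Linf_dist M f h \<le> Linf_dist M f g + Linf_dist M g h"
proof (rule Linf_dist_le_if_AE_le)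
  show "AE x in M. \<bar>f x - h x\<bar> \<le> Linf_dist M f g + Linf_dist M g h"
    using AE_abs_diff_le_Linf_dist[OF assms(1,2)] AE_abs_diff_le_Linf_dist[OF assms(2,3)]
    by eventually_elim auto
  show "0 \<le> Linf_dist M f g + Linf_dist M g h"
    using Linf_dist_nonneg[OF assms(1,2)] Linf_dist_nonneg[OF assms(2,3)] by linarith
qed (use assms in \<open>auto simp: Linf_def\<close>)

lemma convergent_if_dist_le_tendsto_zero:
  fixes u :: "nat \<Rightarrow> 'a::complete_space"
  assumes dist_le: "\<And>n m. n \<le> m \<Longrightarrow> dist (u n) (u m) \<le> r n" and "r \<longlonglongrightarrow> 0"
  obtains l where "u \<longlonglongrightarrow> l" "\<And>n. dist (u n) l \<le> r n"
proof -
  have "Cauchy u"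
  proof (rule metric_CauchyI)
    fix e :: real assume "0 < e"
    have "eventually (\<lambda>n. r n < e) sequentially"
      using order_tendstoD(2)[OF \<open>r \<longlonglongrightarrow> 0\<close> \<open>0 < e\<close>] .
    then obtain N where N: "\<And>n. N \<le> n \<Longrightarrow> r n < e"
      unfolding eventually_sequentially by blast
    have "dist (u m) (u n) < e" if "N \<le> m" "N \<le> n" for m n
      using dist_le[of m n] dist_le[of n m] N[of m] N[of n] that
      by (cases "m \<le> n") (auto simp: dist_commute)
    then show "\<exists>N. \<forall>m\<ge>N. \<forall>n\<ge>N. dist (u m) (u n) < e" by blast
  qed
  then obtain l where lim: "u \<longlonglongrightarrow> l" using convergent_eq_Cauchy convergent_def by blast
  have "dist (u n) l \<le> r n" for n
  proof (rule LIMSEQ_le_const2)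
    show "(\<lambda>m. dist (u n) (u m)) \<longlonglongrightarrow> dist (u n) l" by (intro tendsto_intros lim)
  qed (use dist_le in auto)
  with lim show thesis by (rule that)
qed

lemma Linf_nested_balls_limit:
  assumes c: "\<And>n. c n \<in> Linf M"
    and nested: "\<And>n m. n \<le> m \<Longrightarrow> Linf_dist M (c n) (c m) \<le> r n"
    and "r \<longlonglongrightarrow> 0"
  obtains f where "f \<in> Linf M" "\<And>n. Linf_dist M (c n) f \<le> r n"
proof -
  define f where "f x = lim (\<lambda>m. c m x)" for x
  have "AE x in M. \<forall>n m. \<bar>c n x - c m x\<bar> \<le> Linf_dist M (c n) (c m)"
    by (simp add: AE_all_countable AE_abs_diff_le_Linf_dist c)
  then have close: "AE x in M. \<forall>n. \<bar>c n x - f x\<bar> \<le> r n"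
  proof eventually_elim
    case (elim x)
    have dist_le: "dist (c n x) (c m x) \<le> r n" if "n \<le> m" for n m
      using elim[rule_format, of n m] nested[OF that] by (simp add: dist_real_def)
    obtain l where "(\<lambda>m. c m x) \<longlonglongrightarrow> l" "\<And>n. dist (c n x) l \<le> r n"
      using convergent_if_dist_le_tendsto_zero[OF dist_le \<open>r \<longlonglongrightarrow> 0\<close>] by blast
    then show ?case by (simp add: f_def limI dist_real_def)
  qed
  have f_measurable: "f \<in> borel_measurable M"
    unfolding f_def using c by (intro borel_measurable_lim_metric) (auto simp: Linf_def)
  obtain C where "AE x in M. \<bar>c 0 x\<bar> \<le> C" using c[of 0] unfolding Linf_def by blast
  with close have "AE x in M. \<bar>f x\<bar> \<le> C + r 0"
  proof eventually_elim
    case (elim x)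
    then show ?case using spec[OF elim(1), of 0] by arith
  qed
  with f_measurable have f: "f \<in> Linf M" unfolding Linf_def by blast
  have "0 \<le> r n" for n using nested[of n n] Linf_dist_self[OF c] by simp
  then have "Linf_dist M (c n) f \<le> r n" for n
    using close c[of n] f_measurable by (intro Linf_dist_le_if_AE_le) (auto simp: Linf_def)
  with f show thesis by (rule that)
qed

lemma porous_closed_ball_avoiding:
  assumes porous: "porous S d lam A" and "0 < lam"
    and self: "\<And>x. x \<in> S \<Longrightarrow> d x x = 0"
    and triangle: "\<And>x y z. x \<in> S \<Longrightarrow> y \<in> S \<Longrightarrow> z \<in> S \<Longrightarrow> d x z \<le> d x y + d y z"
    and "f \<in> S" "0 < r"
  obtains f' r' where "f' \<in> S" "0 < r'" "r' \<le> r / 2" "d f f' + r' \<le> r"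
    "\<And>h. h \<in> S \<Longrightarrow> d f' h \<le> r' \<Longrightarrow> h \<notin> A"
proof (cases "\<exists>x\<in>A. d f x < r / 2")
  case False
  then have "h \<notin> A" if "d f h \<le> r / 4" for h using that \<open>0 < r\<close> by force
  with that[of f "r / 4"] show thesis using \<open>f \<in> S\<close> \<open>0 < r\<close> self by simp
next
  case True
  then obtain x where x: "x \<in> A" "d f x < r / 2" by blast
  with porous have "x \<in> S" "porous_at S d lam A x" unfolding porous_def by auto
  then obtain y where y: "y \<in> S" "0 < d x y" "d x y < r / 4"
    and hole: "{z\<in>S. d y z < lam * d x y} \<inter> A = {}"
    using \<open>0 < r\<close> unfolding porous_at_def by (metis divide_pos_pos zero_less_numeral)
  define r' where "r' = min lam 1 * d x y / 2"
  have r': "0 < r'" "r' \<le> d x y / 2" "r' < lam * d x y"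
    using \<open>0 < lam\<close> y unfolding r'_def by (auto simp: min_def)
  show thesis
  proof (rule that[of y r'])
    have "d f y \<le> d f x + d x y" using triangle \<open>f \<in> S\<close> \<open>x \<in> S\<close> \<open>y \<in> S\<close> by blast
    then show "d f y + r' \<le> r" using x y r' by linarith
    show "h \<notin> A" if "h \<in> S" "d y h \<le> r'" for h using that hole r' by force
  qed (use y r' in auto)
qed

lemma porous_nested_closed_balls:
  assumes porous: "\<And>n. porous S d lam (A n)" and "0 < lam"
    and self: "\<And>x. x \<in> S \<Longrightarrow> d x x = 0"
    and triangle: "\<And>x y z. x \<in> S \<Longrightarrow> y \<in> S \<Longrightarrow> z \<in> S \<Longrightarrow> d x z \<le> d x y + d y z"
    and "x\<^sub>0 \<in> S" "0 < r\<^sub>0"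
  obtains c r where "c 0 = x\<^sub>0" "r 0 = r\<^sub>0" "\<And>n. c n \<in> S" "\<And>n. 0 < r n"
    "\<And>n. r (Suc n) \<le> r n / 2" "\<And>n. d (c n) (c (Suc n)) + r (Suc n) \<le> r n"
    "\<And>n h. h \<in> S \<Longrightarrow> d (c (Suc n)) h \<le> r (Suc n) \<Longrightarrow> h \<notin> A n"
proof -
  define fits where "fits n f r = (\<lambda>(f', r'). f' \<in> S \<and> 0 < r' \<and> r' \<le> r / 2 \<and>
      d f f' + r' \<le> r \<and> (\<forall>h\<in>S. d f' h \<le> r' \<longrightarrow> h \<notin> A n))" for n f r
  have fits_some: "fits n f r (SOME q. fits n f r q)" if "f \<in> S" "0 < r" for n f r
  proof (rule someI_ex)
    show "\<exists>q. fits n f r q"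
      by (rule porous_closed_ball_avoiding[OF porous[of n] \<open>0 < lam\<close> self triangle that])
        (auto simp: fits_def)
  qed
  define balls where "balls = rec_nat (x\<^sub>0, r\<^sub>0) (\<lambda>n (f, r). SOME q. fits n f r q)"
  define c r where "c n = fst (balls n)" and "r n = snd (balls n)" for n
  have c_0: "c 0 = x\<^sub>0" and r_0: "r 0 = r\<^sub>0" by (simp_all add: c_def r_def balls_def)
  have balls_Suc: "(c (Suc n), r (Suc n)) = (SOME q. fits n (c n) (r n) q)" for n
    by (simp add: c_def r_def balls_def split: prod.split)
  have fits_Suc: "fits n (c n) (r n) (c (Suc n), r (Suc n))" if "c n \<in> S" "0 < r n" for n
    unfolding balls_Suc using fits_some[OF that] .
  have ball_n: "c n \<in> S \<and> 0 < r n" for n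
  proof (induction n)
    case (Suc n)
    then show ?case using fits_Suc[of n] by (simp add: fits_def)
  qed (simp add: c_0 r_0 \<open>x\<^sub>0 \<in> S\<close> \<open>0 < r\<^sub>0\<close>)
  have "fits n (c n) (r n) (c (Suc n), r (Suc n))" for n using fits_Suc ball_n by blast
  then show thesis using that[of c r] c_0 r_0 ball_n by (simp add: fits_def)
qed

lemma not_sigma_porous_if_contains_closed_ball:
  assumes "0 < lam"
    and self: "\<And>x. x \<in> S \<Longrightarrow> d x x = 0"
    and triangle: "\<And>x y z. x \<in> S \<Longrightarrow> y \<in> S \<Longrightarrow> z \<in> S \<Longrightarrow> d x z \<le> d x y + d y z"
    and complete: "\<And>c r. (\<And>n. c n \<in> S) \<Longrightarrow> (\<And>n m. n \<le> m \<Longrightarrow> d (c n) (c m) \<le> r n) \<Longrightarrow>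
                     r \<longlonglongrightarrow> 0 \<Longrightarrow> \<exists>x\<in>S. \<forall>n. d (c n) x \<le> r n"
    and "x\<^sub>0 \<in> S" "0 < r\<^sub>0" and ball: "{y \<in> S. d x\<^sub>0 y \<le> r\<^sub>0} \<subseteq> E"
  shows "\<not> sigma_porous S d lam E"
proof
  assume "sigma_porous S d lam E"
  then obtain A :: "nat \<Rightarrow> _" where porous: "\<And>n. porous S d lam (A n)" and E: "E = (\<Union>n. A n)"
    unfolding sigma_porous_def by blast
  obtain c r where c_0: "c 0 = x\<^sub>0" and r_0: "r 0 = r\<^sub>0" and c: "\<And>n. c n \<in> S"
    and r_pos: "\<And>n. 0 < r n" and r_halves: "\<And>n. r (Suc n) \<le> r n / 2"
    and inside: "\<And>n. d (c n) (c (Suc n)) + r (Suc n) \<le> r n"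
    and hole: "\<And>n h. h \<in> S \<Longrightarrow> d (c (Suc n)) h \<le> r (Suc n) \<Longrightarrow> h \<notin> A n"
    by (rule porous_nested_closed_balls[where A = A, OF porous \<open>0 < lam\<close> self triangle])
      (use \<open>x\<^sub>0 \<in> S\<close> \<open>0 < r\<^sub>0\<close> in auto)
  have r_le: "r n \<le> r\<^sub>0 / 2 ^ n" for n
  proof (induction n)
    case (Suc n)
    have "r (Suc n) \<le> r n / 2" by (rule r_halves)
    also have "\<dots> \<le> r\<^sub>0 / 2 ^ n / 2" using Suc.IH by (simp add: divide_right_mono)
    finally show ?case by simp
  qed (simp add: r_0)
  have "r \<longlonglongrightarrow> 0"
  proof (rule tendsto_sandwich[of "\<lambda>_. 0" _ _ "\<lambda>n. r\<^sub>0 / 2 ^ n"])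
    show "(\<lambda>n. r\<^sub>0 / 2 ^ n) \<longlonglongrightarrow> 0" by (rule LIMSEQ_divide_realpow_zero) simp
  qed (use r_pos r_le in \<open>auto intro!: always_eventually less_imp_le\<close>)
  have nested: "d (c n) (c m) + r m \<le> r n" if "n \<le> m" for n m
    using that
  proof (induction m rule: dec_induct)
    case base
    show ?case using self c by simp
  next
    case (step m)
    have "d (c n) (c (Suc m)) \<le> d (c n) (c m) + d (c m) (c (Suc m))"
      using triangle c by blast
    with step.IH inside[of m] show ?case by linarith
  qed
  have "\<exists>x\<in>S. \<forall>n. d (c n) x \<le> r n"
  proof (rule complete)
    show "d (c n) (c m) \<le> r n" if "n \<le> m" for n m
      using nested[OF that] r_pos[of m] by linarith
  qed (use c \<open>r \<longlonglongrightarrow> 0\<close> in auto)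
  then obtain x where "x \<in> S" and x: "\<And>n. d (c n) x \<le> r n" by blast
  then have "x \<in> E" using ball x[of 0] c_0 r_0 by auto
  then obtain n where "x \<in> A n" using E by blast
  then show False using hole[OF \<open>x \<in> S\<close> x[of "Suc n"]] by blast
qed

lemma Linf_closed_ball_subset_abs_ge:
  assumes "AE x in M. \<bar>g x\<bar> \<le> K"
  shows "{h \<in> Linf M. Linf_dist M (\<lambda>_. K + 1) h \<le> 1} \<subseteq> {f \<in> Linf M. AE x in M. \<bar>f x\<bar> \<ge> \<bar>g x\<bar>}"
proof safe
  fix h assume h: "h \<in> Linf M" "Linf_dist M (\<lambda>_. K + 1) h \<le> 1"
  have "(\<lambda>_. K + 1) \<in> Linf M" unfolding Linf_def by auto
  from AE_abs_diff_le_Linf_dist[OF this h(1)] assms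
  show "AE x in M. \<bar>h x\<bar> \<ge> \<bar>g x\<bar>" by eventually_elim (use h(2) in auto)
qed

theorem theorem2p7:
  fixes M :: "'a::t2_space measure" and g :: "'a \<Rightarrow> real"
  assumes "locally_compact_space (euclidean :: 'a topology)"
    and "radon_measure M"
    and "g \<in> Linf M"
  shows "\<not> (\<exists>lam. 0 < lam \<and> lam < 1 \<and>
            sigma_porous (Linf M) (Linf_dist M) lam {f \<in> Linf M. AE x in M. \<bar>f x\<bar> \<ge> \<bar>g x\<bar>})"
proof clarify
  fix lam :: real assume "0 < lam"
  obtain K where K: "AE x in M. \<bar>g x\<bar> \<le> K" using \<open>g \<in> Linf M\<close> unfolding Linf_def by blast
  have complete: "\<exists>f\<in>Linf M. \<forall>n. Linf_dist M (c n) f \<le> r n"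
    if "\<And>n. c n \<in> Linf M" "\<And>n m. n \<le> m \<Longrightarrow> Linf_dist M (c n) (c m) \<le> r n" "r \<longlonglongrightarrow> 0" for c r
    using Linf_nested_balls_limit[OF that] by blast
  assume "sigma_porous (Linf M) (Linf_dist M) lam {f \<in> Linf M. AE x in M. \<bar>f x\<bar> \<ge> \<bar>g x\<bar>}"
  moreover have "\<not> ?this"
    by (rule not_sigma_porous_if_contains_closed_ball[OF \<open>0 < lam\<close> Linf_dist_self
          Linf_dist_triangle complete _ _ Linf_closed_ball_subset_abs_ge[OF K]])
      (auto simp: Linf_def)
  ultimately show False by contradiction
qed

end
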